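(* Let $\gamma:S^1\to GL(n,\mathbb{C})$ be a smooth loop satisfying $\gamma(z)\gamma(-z)^T=I$, and suppose $\gamma(z)=\gamma_+(z)\,d(z)\,\gamma_-(z)^{-1}$ is a Birkhoff factorization of $\gamma$. Then $d(z)=I$, the Birkhoff factorization of $\gamma$ is unique, and the factors satisfy $\gamma_\pm(z)\gamma_\pm(-z)^T=I$.
   Context: Let $\mathbb{D}_+=\{|z|\le1\}$ and $\mathbb{D}_-=\{|z|\ge1\}\cup\{\infty\}$ in the Riemann sphere. A Birkhoff factorization of a loop $\gamma$ is a factorization $\gamma(z)=\gamma_+(z)d(z)\gamma_-(z)^{-1}$ on $|z|=1$ where $\gamma_+$ (resp. $\gamma_-$) is the restriction to the unit circle of a function analytic on $\mathbb{D}_+$ (resp. $\mathbb{D}_-$) up to the boundary with values in $GL(n,\mathbb{C})$, $\gamma_-(\infty)=I$, and $d(z)$ is diagonal with diagonal entries $z^{a_i}$, $a_i\in\mathbb{Z}$. *)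

theory Defs
  imports "HOL-Analysis.Analysis"
begin

text \<open>Matrices in GL(n,C) are modelled as invertible elements of complex^'n^'n,
  with an arbitrary finite index type 'n (so n = CARD('n)).\<close>

definition smooth_real_fun :: "(real \<Rightarrow> complex) \<Rightarrow> bool" where
  "smooth_real_fun f \<longleftrightarrow>
     (\<exists>D :: nat \<Rightarrow> real \<Rightarrow> complex. D 0 = f \<and>
        (\<forall>k t. (D k has_vector_derivative D (Suc k) t) (at t)))"

text \<open>A smooth loop S^1 -> GL(n,C); the loop is given by its values on |z| = 1.\<close>
definition smooth_loop :: "(complex \<Rightarrow> complex^'n^'n) \<Rightarrow> bool" where
  "smooth_loop g \<longleftrightarrow>
     (\<forall>z. cmod z = 1 \<longrightarrow> invertible (g z)) \<and>
     (\<forall>i j. smooth_real_fun (\<lambda>t. g (cis t) $ i $ j))"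

definition plus_factor :: "(complex \<Rightarrow> complex^'n^'n) \<Rightarrow> bool" where
  "plus_factor g \<longleftrightarrow>
     (\<forall>i j. continuous_on (cball 0 1) (\<lambda>z. g z $ i $ j) \<and>
            (\<lambda>z. g z $ i $ j) holomorphic_on ball 0 1) \<and>
     (\<forall>z \<in> cball 0 1. invertible (g z))"

text \<open>Analytic on D_- = {|z| >= 1} \<union> {\<infinity>} up to the boundary, with values in GL(n,C)
  and value I at infinity: in the chart w = 1/z around infinity this is plus_factor.\<close>
definition minus_factor :: "(complex \<Rightarrow> complex^'n^'n) \<Rightarrow> bool" where
  "minus_factor g \<longleftrightarrow> plus_factor (\<lambda>w. if w = 0 then mat 1 else g (1 / w))"

definition diag_powers :: "('n \<Rightarrow> int) \<Rightarrow> complex \<Rightarrow> complex^'n^'n" where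
  "diag_powers a z = (\<chi> i j. if i = j then z powi a i else 0)"

definition birkhoff_factorization ::
  "(complex \<Rightarrow> complex^'n^'n) \<Rightarrow> (complex \<Rightarrow> complex^'n^'n) \<Rightarrow> ('n \<Rightarrow> int)
     \<Rightarrow> (complex \<Rightarrow> complex^'n^'n) \<Rightarrow> bool" where
  "birkhoff_factorization g gp a gm \<longleftrightarrow>
     plus_factor gp \<and> minus_factor gm \<and>
     (\<forall>z. cmod z = 1 \<longrightarrow> g z = gp z ** diag_powers a z ** matrix_inv (gm z))"

end

theory Submission
  imports Defs "HOL-Complex_Analysis.Conformal_Mappings"
begin

text \<open>Let K(z) = gp(-z)^T gp(z) and L(w) = Gm(-w)^T Gm(w), where Gm(w) = gm(1/w) is the minus
  factor read in the chart at infinity. Both are analytic on the closed unit disk, L(0) = I, and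
  the symmetry g(z) g(-z)^T = I becomes L(cnj z) = d(-z) K(z) d(z) on the unit circle.
  If two functions analytic on the closed disk satisfy f(z) = h(cnj z) on the circle, then f
  inside and h(1/z) outside paste to a bounded entire function, so both are constant
  (Liouville). On the diagonal, (-z^2)^(a_i) K_ii(z) would then be constant with value
  L_ii(0) = 1, which is impossible for a_i > 0 since it vanishes at 0. The loop g^-T is again
  symmetric and has the factorization gp^-T d^-1 (gm^-T)^-1, which rules out a_i < 0.
  Once d = I, the same constancy argument gives K = L = I, i.e. the symmetry of the factors,
  and applied to hp^-1 gp = hm^-1 gm on the circle it gives uniqueness.\<close>

lemma matrix_inv_right:
  fixes A :: "'a::field^'n^'n"
  assumes "invertible A"
  shows "A ** matrix_inv A = mat 1"
proof -
  have "\<exists>B. A ** B = mat 1 \<and> B ** A = mat 1"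
    using assms by (simp add: invertible_def)
  then have "A ** matrix_inv A = mat 1 \<and> matrix_inv A ** A = mat 1"
    unfolding matrix_inv_def by (rule someI_ex)
  then show ?thesis ..
qed

lemma matrix_inv_left:
  fixes A :: "'a::field^'n^'n"
  assumes "invertible A"
  shows "matrix_inv A ** A = mat 1"
  using matrix_left_right_inverse1[OF matrix_inv_right[OF assms]] .

lemma matrix_inv_unique:
  fixes A B :: "'a::field^'n^'n"
  assumes "A ** B = mat 1"
  shows "matrix_inv A = B"
proof -
  have "invertible A"
    using assms matrix_left_right_inverse1 unfolding invertible_def by blast
  have "matrix_inv A = matrix_inv A ** (A ** B)"
    using assms by simp
  also have "\<dots> = (matrix_inv A ** A) ** B"
    by (simp add: matrix_mul_assoc)
  finally show ?thesis
    by (simp add: matrix_inv_left \<open>invertible A\<close>)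
qed

lemma invertible_matrix_inv:
  fixes A :: "'a::field^'n^'n"
  shows "invertible A \<Longrightarrow> invertible (matrix_inv A)"
  by (metis invertible_def matrix_inv_left matrix_inv_right)

lemma matrix_inv_mat_1: "matrix_inv (mat 1 :: 'a::field^'n^'n) = mat 1"
  by (rule matrix_inv_unique) simp

lemma matrix_inv_matrix_inv:
  fixes A :: "'a::field^'n^'n"
  shows "invertible A \<Longrightarrow> matrix_inv (matrix_inv A) = A"
  by (rule matrix_inv_unique) (rule matrix_inv_left)

lemma matrix_inv_mult:
  fixes A B :: "'a::field^'n^'n"
  assumes "invertible A" "invertible B"
  shows "matrix_inv (A ** B) = matrix_inv B ** matrix_inv A"
proof (rule matrix_inv_unique)
  have "A ** B ** (matrix_inv B ** matrix_inv A) = A ** (B ** matrix_inv B) ** matrix_inv A"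
    by (simp add: matrix_mul_assoc)
  then show "A ** B ** (matrix_inv B ** matrix_inv A) = mat 1"
    by (simp add: assms matrix_inv_right)
qed

lemma matrix_inv_transpose:
  fixes A :: "'a::field^'n^'n"
  assumes "invertible A"
  shows "matrix_inv (transpose A) = transpose (matrix_inv A)"
  by (rule matrix_inv_unique)
    (simp add: matrix_transpose_mul[symmetric] matrix_inv_left[OF assms] transpose_mat)

lemma matrix_inv_entry:
  fixes A :: "'a::field^'n^'n"
  assumes "invertible A"
  shows "matrix_inv A $ k $ j = det (\<chi> i l. if l = k then mat 1 $ i $ j else A $ i $ l) / det A"
proof -
  have "A *v (\<chi> l. matrix_inv A $ l $ j) = (\<chi> i. (A ** matrix_inv A) $ i $ j)"
    by (simp add: matrix_vector_mult_def matrix_matrix_mult_def)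
  also have "\<dots> = (\<chi> i. mat 1 $ i $ j)"
    by (simp add: matrix_inv_right[OF assms])
  finally have "(\<chi> l. matrix_inv A $ l $ j) =
      (\<chi> k. det (\<chi> i l. if l = k then (\<chi> i. mat 1 $ i $ j) $ i else A $ i $ l) / det A)"
    using cramer[of A] assms invertible_det_nz by blast
  from arg_cong[where f = "\<lambda>v. v $ k", OF this] show ?thesis
    by (simp cong: if_cong)
qed

lemma invertible_transpose:
  fixes A :: "'a::field^'n^'n"
  assumes "invertible A"
  shows "invertible (transpose A)"
proof -
  have "transpose A ** transpose (matrix_inv A) = mat 1"
    by (simp add: matrix_transpose_mul[symmetric] matrix_inv_left[OF assms] transpose_mat)
  then show ?thesis
    using invertible_right_inverse by blast
qed

lemma matrix_inv_mult_eq_mat_1_iff: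
  fixes A B :: "'a::field^'n^'n"
  assumes "invertible A"
  shows "matrix_inv A ** B = mat 1 \<longleftrightarrow> B = A"
proof
  assume "matrix_inv A ** B = mat 1"
  then have "A ** (matrix_inv A ** B) = A"
    by simp
  then show "B = A"
    by (simp add: matrix_mul_assoc matrix_inv_right[OF assms])
qed (simp add: matrix_inv_left[OF assms])

definition disk_analytic :: "(complex \<Rightarrow> complex) \<Rightarrow> bool" where
  "disk_analytic f \<longleftrightarrow> continuous_on (cball 0 1) f \<and> f holomorphic_on ball 0 1"

lemma disk_analytic_const: "disk_analytic (\<lambda>z. c)"
  unfolding disk_analytic_def by (auto intro: continuous_intros holomorphic_intros)

lemma disk_analytic_mult: "disk_analytic f \<Longrightarrow> disk_analytic g \<Longrightarrow> disk_analytic (\<lambda>z. f z * g z)"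
  unfolding disk_analytic_def by (auto intro: continuous_intros holomorphic_intros)

lemma disk_analytic_divide:
  "disk_analytic f \<Longrightarrow> disk_analytic g \<Longrightarrow> (\<And>z. z \<in> cball 0 1 \<Longrightarrow> g z \<noteq> 0)
    \<Longrightarrow> disk_analytic (\<lambda>z. f z / g z)"
  unfolding disk_analytic_def by (auto intro: continuous_intros holomorphic_intros)

lemma disk_analytic_sum:
  "(\<And>k. k \<in> S \<Longrightarrow> disk_analytic (f k)) \<Longrightarrow> disk_analytic (\<lambda>z. \<Sum>k\<in>S. f k z)"
  unfolding disk_analytic_def by (auto intro!: continuous_on_sum holomorphic_on_sum)

lemma disk_analytic_prod:
  "(\<And>k. k \<in> S \<Longrightarrow> disk_analytic (f k)) \<Longrightarrow> disk_analytic (\<lambda>z. \<Prod>k\<in>S. f k z)"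
  unfolding disk_analytic_def by (auto intro!: continuous_on_prod holomorphic_on_prod)

lemma disk_analytic_reflect: "disk_analytic f \<Longrightarrow> disk_analytic (\<lambda>z. f (- z))"
  unfolding disk_analytic_def
  by (auto intro!: continuous_on_compose2[of "cball 0 1" f]
      holomorphic_on_compose_gen[of _ _ f "ball 0 1", unfolded o_def]
      continuous_intros holomorphic_intros)

lemma disk_analytic_cong:
  "disk_analytic f \<Longrightarrow> (\<And>z. z \<in> cball 0 1 \<Longrightarrow> f z = g z) \<Longrightarrow> disk_analytic g"
  unfolding disk_analytic_def
  by (metis ball_subset_cball continuous_on_eq holomorphic_transform subsetD)

lemma inverse_eq_cnj_on_circle:
  fixes z :: complex
  assumes "cmod z = 1"
  shows "1 / z = cnj z"
  using assms by (simp add: complex_div_cnj[of 1 z])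

lemma disk_reflection_constant:
  assumes f: "disk_analytic f" and h: "disk_analytic h"
    and eq: "\<And>z. cmod z = 1 \<Longrightarrow> f z = h (cnj z)"
  obtains c where "\<And>z. z \<in> cball 0 1 \<Longrightarrow> f z = c"
proof -
  define F where "F z = (if cmod z \<le> 1 then f z else h (1 / z))" for z
  have cont_h_inv: "continuous_on (- ball 0 1) (\<lambda>z. h (1 / z))"
  proof (rule continuous_on_compose2[of "cball 0 1" h])
    show "continuous_on (cball 0 1) h" using h by (simp add: disk_analytic_def)
  qed (auto intro!: continuous_intros simp: norm_divide divide_le_eq)
  have "continuous_on (cball 0 1 \<union> - ball 0 1) F"
    unfolding F_def
  proof (rule continuous_on_cases)
    show "\<forall>z. z \<in> cball 0 1 \<and> \<not> cmod z \<le> 1 \<or> z \<in> - ball 0 1 \<and> cmod z \<le> 1 \<longrightarrow>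
        f z = h (1 / z)"
      using eq inverse_eq_cnj_on_circle by fastforce
  qed (use f cont_h_inv in \<open>auto simp: disk_analytic_def\<close>)
  moreover have "cball 0 1 \<union> - ball 0 1 = (UNIV :: complex set)" by auto
  ultimately have cont_F: "continuous_on UNIV F" by simp
  \<comment> \<open>Composing with exp turns the circle into the imaginary axis, across which we can paste.\<close>
  have hol: "(F \<circ> exp) holomorphic_on UNIV"
  proof (rule holomorphic_on_paste_across_line[of UNIV 1 _ 0])
    have "(f \<circ> exp) holomorphic_on {w. 1 \<bullet> w < 0}"
      using f by (intro holomorphic_on_compose_gen[of _ _ _ "ball 0 1"])
        (auto intro: holomorphic_intros simp: disk_analytic_def)
    then show "(F \<circ> exp) holomorphic_on UNIV \<inter> {w. 1 \<bullet> w < 0}"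
      unfolding Int_UNIV_left by (rule holomorphic_transform) (auto simp: F_def)
    have "(h \<circ> (\<lambda>w. exp (- w))) holomorphic_on {w. 0 < 1 \<bullet> w}"
      using h by (intro holomorphic_on_compose_gen[of _ _ _ "ball 0 1"])
        (auto intro!: holomorphic_intros simp: disk_analytic_def)
    then show "(F \<circ> exp) holomorphic_on UNIV \<inter> {w. 0 < 1 \<bullet> w}"
      unfolding Int_UNIV_left by (rule holomorphic_transform) (auto simp: F_def exp_minus divide_inverse)
    show "continuous_on UNIV (F \<circ> exp)"
      by (intro continuous_on_compose continuous_intros continuous_on_subset[OF cont_F]) simp
  qed simp_all
  have bdd: "bounded (range (F \<circ> exp))"
  proof (rule bounded_subset)
    show "bounded (f ` cball 0 1 \<union> h ` cball 0 1)"
      using f h by (auto intro!: compact_imp_bounded compact_continuous_image simp: disk_analytic_def)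
    show "range (F \<circ> exp) \<subseteq> f ` cball 0 1 \<union> h ` cball 0 1"
      by (auto simp: F_def norm_divide divide_le_eq)
  qed
  obtain c where c: "\<And>w. F (exp w) = c"
    using Liouville_theorem[OF hol bdd] unfolding constant_on_def by auto
  have F_c: "F z = c" for z
  proof (rule continuous_constant_on_closure[where f = F and S = "- {0}"])
    show "z \<in> closure (- {0})" by (simp add: closure_interior)
    show "F z = c" if "z \<in> - {0}" for z
      using c[of "Ln z"] that by simp
  qed (simp add: closure_interior cont_F)
  show ?thesis
  proof (rule that)
    show "f z = c" if "z \<in> cball 0 1" for z
      using F_c[of z] that by (simp add: F_def)
  qed
qed

lemma disk_reflection_eq:
  assumes f: "disk_analytic f" and h: "disk_analytic h"
    and eq: "\<And>z. cmod z = 1 \<Longrightarrow> f z = h (cnj z)"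
    and z: "z \<in> cball 0 1"
  shows "f z = h 0"
proof -
  obtain c where c: "\<And>z. z \<in> cball 0 1 \<Longrightarrow> f z = c"
    using disk_reflection_constant[OF f h eq] by blast
  obtain c' where c': "\<And>z. z \<in> cball 0 1 \<Longrightarrow> h z = c'"
    using disk_reflection_constant[OF h f] eq[of "cnj z" for z] by (metis complex_cnj_cnj complex_mod_cnj)
  have "c = c'"
    using c[of 1] c'[of 1] eq[of 1] by simp
  then show ?thesis
    using c[OF z] c'[of 0] by simp
qed

definition disk_analytic_matrix :: "(complex \<Rightarrow> complex^'n^'m) \<Rightarrow> bool" where
  "disk_analytic_matrix A \<longleftrightarrow> (\<forall>i j. disk_analytic (\<lambda>z. A z $ i $ j))"

lemma disk_analytic_matrix_mult:
  "disk_analytic_matrix A \<Longrightarrow> disk_analytic_matrix B \<Longrightarrow> disk_analytic_matrix (\<lambda>z. A z ** B z)"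
  unfolding disk_analytic_matrix_def matrix_matrix_mult_def
  by (auto intro!: disk_analytic_sum disk_analytic_mult)

lemma disk_analytic_matrix_transpose:
  "disk_analytic_matrix A \<Longrightarrow> disk_analytic_matrix (\<lambda>z. transpose (A z))"
  by (simp add: disk_analytic_matrix_def transpose_def)

lemma disk_analytic_matrix_reflect:
  "disk_analytic_matrix A \<Longrightarrow> disk_analytic_matrix (\<lambda>z. A (- z))"
  unfolding disk_analytic_matrix_def
  using disk_analytic_reflect[of "\<lambda>z. A z $ i $ j" for i j] by simp

lemma disk_analytic_det:
  "disk_analytic_matrix A \<Longrightarrow> disk_analytic (\<lambda>z. det (A z))"
  unfolding disk_analytic_matrix_def det_def
  by (auto intro!: disk_analytic_sum disk_analytic_mult disk_analytic_const disk_analytic_prod)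

lemma disk_analytic_matrix_inv:
  fixes A :: "complex \<Rightarrow> complex^'n^'n"
  assumes A: "disk_analytic_matrix A" and inv: "\<And>z. z \<in> cball 0 1 \<Longrightarrow> invertible (A z)"
  shows "disk_analytic_matrix (\<lambda>z. matrix_inv (A z))"
  unfolding disk_analytic_matrix_def
proof (intro allI)
  fix k j
  define B where "B z = (\<chi> i l. if l = k then mat 1 $ i $ j else A z $ i $ l)" for z
  have "disk_analytic (\<lambda>z. B z $ i $ l)" for i l
    using A disk_analytic_const by (cases "l = k") (simp_all add: disk_analytic_matrix_def B_def)
  then have "disk_analytic_matrix B"
    by (simp add: disk_analytic_matrix_def)
  then have "disk_analytic (\<lambda>z. det (B z) / det (A z))"
    using inv invertible_det_nz by (intro disk_analytic_divide disk_analytic_det A) auto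
  then show "disk_analytic (\<lambda>z. matrix_inv (A z) $ k $ j)"
  proof (rule disk_analytic_cong)
    fix z :: complex
    assume "z \<in> cball 0 1"
    show "det (B z) / det (A z) = matrix_inv (A z) $ k $ j"
      unfolding B_def matrix_inv_entry[OF inv[OF \<open>z \<in> cball 0 1\<close>]] ..
  qed
qed

lemma disk_analytic_matrix_reflection_eq:
  fixes X Y :: "complex \<Rightarrow> complex^'n^'m"
  assumes X: "disk_analytic_matrix X" and Y: "disk_analytic_matrix Y"
    and eq: "\<And>z. cmod z = 1 \<Longrightarrow> X z = Y (cnj z)"
    and z: "z \<in> cball 0 1"
  shows "X z = Y 0" "Y z = X 0"
proof -
  have entry: "A z $ i $ j = B 0 $ i $ j"
    if "disk_analytic_matrix A" "disk_analytic_matrix B" "\<And>w. cmod w = 1 \<Longrightarrow> A w = B (cnj w)"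
    for A B :: "complex \<Rightarrow> complex^'n^'m" and i j
    using disk_reflection_eq[of "\<lambda>z. A z $ i $ j" "\<lambda>z. B z $ i $ j", OF _ _ _ z] that
    by (simp add: disk_analytic_matrix_def)
  have eq': "Y w = X (cnj w)" if "cmod w = 1" for w
    using eq[of "cnj w"] that by simp
  show "X z = Y 0" "Y z = X 0"
    using entry[OF X Y eq] entry[OF Y X eq'] by (simp_all add: vec_eq_iff)
qed

lemma plus_factor_iff:
  "plus_factor A \<longleftrightarrow> disk_analytic_matrix A \<and> (\<forall>z\<in>cball 0 1. invertible (A z))"
  by (auto simp: plus_factor_def disk_analytic_matrix_def disk_analytic_def)

definition chart_at_infinity :: "(complex \<Rightarrow> complex^'n^'n) \<Rightarrow> complex \<Rightarrow> complex^'n^'n" where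
  "chart_at_infinity g w = (if w = 0 then mat 1 else g (1 / w))"

lemma minus_factor_iff: "minus_factor g \<longleftrightarrow> plus_factor (chart_at_infinity g)"
  by (simp add: minus_factor_def chart_at_infinity_def[abs_def])

lemma chart_at_infinity_0 [simp]: "chart_at_infinity g 0 = mat 1"
  by (simp add: chart_at_infinity_def)

lemma chart_at_infinity_inverse:
  "z \<noteq> 0 \<Longrightarrow> chart_at_infinity g (1 / z) = g z"
  by (simp add: chart_at_infinity_def)

lemma chart_at_infinity_cnj:
  assumes "cmod z = 1"
  shows "chart_at_infinity g (cnj z) = g z"
proof -
  have "z \<noteq> 0"
    using assms by auto
  then show ?thesis
    using chart_at_infinity_inverse[of z g] inverse_eq_cnj_on_circle[OF assms] by simp
qed

lemma minus_factor_invertible: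
  assumes "minus_factor g" "1 \<le> cmod z"
  shows "invertible (g z)"
proof -
  have "z \<noteq> 0" "1 / z \<in> cball 0 1"
    using assms(2) by (auto simp: norm_divide divide_le_eq)
  moreover have "\<forall>w\<in>cball 0 1. invertible (chart_at_infinity g w)"
    using assms(1) by (simp add: minus_factor_iff plus_factor_iff)
  ultimately show ?thesis
    using chart_at_infinity_inverse[of z g] by metis
qed

lemma plus_factor_inverse_transpose:
  assumes "plus_factor A"
  shows "plus_factor (\<lambda>z. transpose (matrix_inv (A z)))"
  using assms
  by (auto simp: plus_factor_iff invertible_transpose invertible_matrix_inv
      intro!: disk_analytic_matrix_transpose disk_analytic_matrix_inv)

lemma minus_factor_inverse_transpose:
  assumes "minus_factor g"
  shows "minus_factor (\<lambda>z. transpose (matrix_inv (g z)))"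
proof -
  have "chart_at_infinity (\<lambda>z. transpose (matrix_inv (g z))) =
      (\<lambda>w. transpose (matrix_inv (chart_at_infinity g w)))"
    by (auto simp: chart_at_infinity_def matrix_inv_mat_1 transpose_mat)
  then show ?thesis
    using assms plus_factor_inverse_transpose by (simp add: minus_factor_iff)
qed

lemma diag_powers_mult_left: "(diag_powers a z ** M) $ i $ j = z powi a i * M $ i $ j"
  unfolding diag_powers_def matrix_matrix_mult_def vec_lambda_beta
  by (subst sum.cong[OF refl, where h = "\<lambda>k. if k = i then z powi a i * M $ i $ j else 0"]) auto

lemma diag_powers_mult_right: "(M ** diag_powers a z) $ i $ j = M $ i $ j * z powi a j"
  unfolding diag_powers_def matrix_matrix_mult_def vec_lambda_beta
  by (subst sum.cong[OF refl, where h = "\<lambda>k. if k = j then M $ i $ j * z powi a j else 0"]) auto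

lemma diag_powers_conj_diagonal:
  "(diag_powers a u ** M ** diag_powers a v) $ i $ i = (u * v) powi a i * M $ i $ i"
  by (simp add: diag_powers_mult_left diag_powers_mult_right power_int_mult_distrib)

lemma transpose_diag_powers: "transpose (diag_powers a z) = diag_powers a z"
  by (simp add: diag_powers_def transpose_def vec_eq_iff)

lemma diag_powers_zero: "diag_powers (\<lambda>_. 0) z = mat 1"
  by (simp add: diag_powers_def mat_def cong: if_cong)

lemma diag_powers_mult_uminus:
  assumes "z \<noteq> 0"
  shows "diag_powers a z ** diag_powers (- a) z = mat 1"
proof -
  have "z powi a i * z powi (- a i) = 1" for i
    using assms by (simp add: power_int_add[symmetric])
  then have "(diag_powers a z ** diag_powers (- a) z) $ i $ j = mat 1 $ i $ j" for i j
    unfolding diag_powers_mult_left by (simp add: diag_powers_def mat_def)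
  then show ?thesis
    by (simp add: vec_eq_iff)
qed

lemma invertible_diag_powers: "z \<noteq> 0 \<Longrightarrow> invertible (diag_powers a z)"
  using diag_powers_mult_uminus invertible_right_inverse by blast

lemma matrix_inv_diag_powers: "z \<noteq> 0 \<Longrightarrow> matrix_inv (diag_powers a z) = diag_powers (- a) z"
  by (rule matrix_inv_unique) (rule diag_powers_mult_uminus)

definition twisted_orthogonal_loop :: "(complex \<Rightarrow> complex^'n^'n) \<Rightarrow> bool" where
  "twisted_orthogonal_loop g \<longleftrightarrow> (\<forall>z. cmod z = 1 \<longrightarrow> g z ** transpose (g (- z)) = mat 1)"

definition twisted_gram :: "(complex \<Rightarrow> complex^'n^'n) \<Rightarrow> complex \<Rightarrow> complex^'n^'n" where
  "twisted_gram A z = transpose (A (- z)) ** A z"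

lemma twisted_gram_eq_mat_1_iff:
  "twisted_gram A z = mat 1 \<longleftrightarrow> A z ** transpose (A (- z)) = mat 1"
  unfolding twisted_gram_def by (rule matrix_left_right_inverse)

lemma disk_analytic_matrix_twisted_gram:
  "disk_analytic_matrix A \<Longrightarrow> disk_analytic_matrix (twisted_gram A)"
  unfolding twisted_gram_def[abs_def]
  by (intro disk_analytic_matrix_mult disk_analytic_matrix_transpose disk_analytic_matrix_reflect)

lemma twisted_orthogonal_loop_inverse_transpose:
  assumes "twisted_orthogonal_loop g"
  shows "twisted_orthogonal_loop (\<lambda>z. transpose (matrix_inv (g z)))"
proof -
  have inv_transpose: "transpose (matrix_inv (g z)) = g (- z)" if "cmod z = 1" for z
    using assms that matrix_inv_unique
    by (metis transpose_transpose twisted_orthogonal_loop_def)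
  show ?thesis
    unfolding twisted_orthogonal_loop_def
  proof (intro allI impI)
    fix z :: complex
    assume "cmod z = 1"
    then show "transpose (matrix_inv (g z)) ** transpose (transpose (matrix_inv (g (- z)))) = mat 1"
      using assms[unfolded twisted_orthogonal_loop_def, rule_format, of "- z"] inv_transpose[of z]
        inv_transpose[of "- z"]
      by simp
  qed
qed

lemma birkhoff_factorization_invertible:
  assumes "birkhoff_factorization g gp a gm" "cmod z = 1"
  shows "invertible (gp z)" "invertible (gm z)"
  using assms minus_factor_invertible[of gm z]
  by (auto simp: birkhoff_factorization_def plus_factor_def)

lemma birkhoff_factorization_inverse_transpose:
  assumes bf: "birkhoff_factorization g gp a gm"
  shows "birkhoff_factorization (\<lambda>z. transpose (matrix_inv (g z)))
    (\<lambda>z. transpose (matrix_inv (gp z))) (- a) (\<lambda>z. transpose (matrix_inv (gm z)))"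
  unfolding birkhoff_factorization_def
proof (intro conjI allI impI)
  show "plus_factor (\<lambda>z. transpose (matrix_inv (gp z)))"
    using bf plus_factor_inverse_transpose by (auto simp: birkhoff_factorization_def)
  show "minus_factor (\<lambda>z. transpose (matrix_inv (gm z)))"
    using bf minus_factor_inverse_transpose by (auto simp: birkhoff_factorization_def)
  fix z :: complex
  assume z: "cmod z = 1"
  note inv = birkhoff_factorization_invertible[OF bf z]
  have "z \<noteq> 0"
    using z by auto
  note d = invertible_diag_powers[OF this] matrix_inv_diag_powers[OF this]
  have "matrix_inv (g z) = matrix_inv (gp z ** diag_powers a z ** matrix_inv (gm z))"
    using bf z by (simp add: birkhoff_factorization_def)
  also have "\<dots> = matrix_inv (matrix_inv (gm z)) ** matrix_inv (gp z ** diag_powers a z)"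
    by (simp add: inv d matrix_inv_mult invertible_mult invertible_matrix_inv)
  also have "\<dots> = gm z ** (diag_powers (- a) z ** matrix_inv (gp z))"
    by (simp add: inv d matrix_inv_mult matrix_inv_matrix_inv)
  finally show "transpose (matrix_inv (g z)) =
      transpose (matrix_inv (gp z)) ** diag_powers (- a) z ** matrix_inv (transpose (matrix_inv (gm z)))"
    by (simp add: inv matrix_transpose_mul transpose_diag_powers matrix_inv_transpose
        invertible_matrix_inv matrix_inv_matrix_inv matrix_mul_assoc)
qed

lemma twisted_gram_chart_at_infinity:
  assumes tw: "twisted_orthogonal_loop g" and bf: "birkhoff_factorization g gp a gm"
    and z: "cmod z = 1"
  shows "twisted_gram (chart_at_infinity gm) (cnj z) =
    diag_powers a (- z) ** twisted_gram gp z ** diag_powers a z"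
proof -
  have gm_fac: "g w ** gm w = gp w ** diag_powers a w" if "cmod w = 1" for w
  proof -
    have "g w ** gm w = gp w ** diag_powers a w ** (matrix_inv (gm w) ** gm w)"
      using bf that by (simp add: birkhoff_factorization_def matrix_mul_assoc)
    then show ?thesis
      by (simp add: matrix_inv_left[OF birkhoff_factorization_invertible(2)[OF bf that]])
  qed
  have "transpose (g (- z)) ** g z = mat 1"
    using tw z matrix_left_right_inverse unfolding twisted_orthogonal_loop_def by blast
  then have "twisted_gram (chart_at_infinity gm) (cnj z) =
      transpose (gm (- z)) ** (transpose (g (- z)) ** g z) ** gm z"
    using chart_at_infinity_cnj[of z gm] chart_at_infinity_cnj[of "- z" gm] z
    by (simp add: twisted_gram_def)
  also have "\<dots> = transpose (g (- z) ** gm (- z)) ** (g z ** gm z)"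
    by (simp add: matrix_transpose_mul matrix_mul_assoc)
  also have "\<dots> = transpose (gp (- z) ** diag_powers a (- z)) ** (gp z ** diag_powers a z)"
    using gm_fac[of z] gm_fac[of "- z"] z by simp
  also have "\<dots> = diag_powers a (- z) ** twisted_gram gp z ** diag_powers a z"
    by (simp add: twisted_gram_def matrix_transpose_mul matrix_mul_assoc transpose_diag_powers)
  finally show ?thesis .
qed

lemma twisted_gram_chart_at_infinity_0: "twisted_gram (chart_at_infinity g) 0 = mat 1"
  by (simp add: twisted_gram_def transpose_mat)

lemma disk_reflection_power_nonpos:
  assumes f: "disk_analytic f" and h: "disk_analytic h" and h0: "h 0 \<noteq> 0"
    and eq: "\<And>z. cmod z = 1 \<Longrightarrow> h (cnj z) = (- z\<^sup>2) powi k * f z"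
  shows "k \<le> 0"
proof (rule ccontr)
  assume "\<not> k \<le> 0"
  then obtain n where n: "k = int n" "n > 0"
    by (metis linorder_not_le zero_less_imp_eq_int)
  have "disk_analytic (\<lambda>z. (- z\<^sup>2) ^ n * f z)"
    using f unfolding disk_analytic_def by (auto intro!: continuous_intros holomorphic_intros)
  then have "(- 0\<^sup>2) ^ n * f 0 = h 0"
    by (rule disk_reflection_eq) (use h eq n in simp_all)
  then show False
    using h0 n by (simp add: power_0_left)
qed

lemma birkhoff_exponent_nonpos:
  assumes tw: "twisted_orthogonal_loop g" and bf: "birkhoff_factorization g gp a gm"
  shows "a i \<le> 0"
proof (rule disk_reflection_power_nonpos)
  have "plus_factor gp" "plus_factor (chart_at_infinity gm)"
    using bf by (simp_all add: birkhoff_factorization_def minus_factor_iff)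
  then have "disk_analytic_matrix (twisted_gram gp)"
    "disk_analytic_matrix (twisted_gram (chart_at_infinity gm))"
    by (simp_all add: plus_factor_iff disk_analytic_matrix_twisted_gram)
  then show "disk_analytic (\<lambda>z. twisted_gram gp z $ i $ i)"
    "disk_analytic (\<lambda>z. twisted_gram (chart_at_infinity gm) z $ i $ i)"
    by (simp_all add: disk_analytic_matrix_def)
  show "twisted_gram (chart_at_infinity gm) 0 $ i $ i \<noteq> 0"
    by (simp add: twisted_gram_chart_at_infinity_0 mat_def)
  show "twisted_gram (chart_at_infinity gm) (cnj z) $ i $ i =
      (- z\<^sup>2) powi a i * twisted_gram gp z $ i $ i" if "cmod z = 1" for z
    using twisted_gram_chart_at_infinity[OF tw bf that]
    by (simp add: diag_powers_conj_diagonal power2_eq_square)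
qed

lemma birkhoff_exponents_zero:
  assumes tw: "twisted_orthogonal_loop g" and bf: "birkhoff_factorization g gp a gm"
  shows "a = (\<lambda>_. 0)"
proof
  fix i
  have "(- a) i \<le> 0"
    by (rule birkhoff_exponent_nonpos[OF twisted_orthogonal_loop_inverse_transpose[OF tw]
          birkhoff_factorization_inverse_transpose[OF bf]])
  then show "a i = 0"
    using birkhoff_exponent_nonpos[OF tw bf, of i] by simp
qed

lemma birkhoff_factorization_unique:
  assumes bf: "birkhoff_factorization g gp (\<lambda>_. 0) gm"
    and bf': "birkhoff_factorization g hp (\<lambda>_. 0) hm"
  shows "z \<in> cball 0 1 \<Longrightarrow> hp z = gp z" "1 \<le> cmod z \<Longrightarrow> hm z = gm z"
proof -
  define X where "X z = matrix_inv (hp z) ** gp z" for z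
  define Y where "Y w = matrix_inv (chart_at_infinity hm w) ** chart_at_infinity gm w" for w
  have plus: "plus_factor gp" "plus_factor hp"
    "plus_factor (chart_at_infinity gm)" "plus_factor (chart_at_infinity hm)"
    using bf bf' by (simp_all add: birkhoff_factorization_def minus_factor_iff)
  have X: "disk_analytic_matrix X" and Y: "disk_analytic_matrix Y"
    using plus unfolding X_def[abs_def] Y_def[abs_def] plus_factor_iff
    by (auto intro!: disk_analytic_matrix_mult disk_analytic_matrix_inv)
  have XY: "X z = Y (cnj z)" if z: "cmod z = 1" for z
  proof -
    note inv = birkhoff_factorization_invertible[OF bf z] birkhoff_factorization_invertible[OF bf' z]
    have "X z = matrix_inv (hp z) ** gp z ** (matrix_inv (gm z) ** gm z)"
      by (simp add: X_def inv matrix_inv_left)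
    also have "\<dots> = matrix_inv (hp z) ** (gp z ** matrix_inv (gm z)) ** gm z"
      by (simp add: matrix_mul_assoc)
    also have "gp z ** matrix_inv (gm z) = hp z ** matrix_inv (hm z)"
      using bf bf' z by (simp add: birkhoff_factorization_def diag_powers_zero)
    also have "matrix_inv (hp z) ** (hp z ** matrix_inv (hm z)) ** gm z = matrix_inv (hm z) ** gm z"
      by (simp add: matrix_mul_assoc inv matrix_inv_left)
    finally show ?thesis
      using z by (simp add: Y_def chart_at_infinity_cnj)
  qed
  have Y0: "Y 0 = mat 1"
    by (simp add: Y_def matrix_inv_mat_1)
  show "hp z = gp z" if "z \<in> cball 0 1"
    using disk_analytic_matrix_reflection_eq(1)[OF X Y XY that] plus(2) that
    by (simp add: Y0 X_def plus_factor_iff matrix_inv_mult_eq_mat_1_iff)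
  show "hm z = gm z" if "1 \<le> cmod z"
  proof -
    have "z \<noteq> 0" "1 / z \<in> cball 0 1"
      using that by (auto simp: norm_divide divide_le_eq)
    have "X 0 = mat 1"
      using disk_analytic_matrix_reflection_eq(1)[OF X Y XY] Y0 by simp
    then have "Y (1 / z) = mat 1"
      using disk_analytic_matrix_reflection_eq(2)[OF X Y XY \<open>1 / z \<in> cball 0 1\<close>] by simp
    then show ?thesis
      using \<open>z \<noteq> 0\<close> minus_factor_invertible[of hm z] bf' that
      by (simp add: Y_def chart_at_infinity_inverse matrix_inv_mult_eq_mat_1_iff
          birkhoff_factorization_def)
  qed
qed

lemma birkhoff_factors_twisted_orthogonal:
  assumes tw: "twisted_orthogonal_loop g" and bf: "birkhoff_factorization g gp (\<lambda>_. 0) gm"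
  shows "cmod z \<le> 1 \<Longrightarrow> gp z ** transpose (gp (- z)) = mat 1"
    "1 \<le> cmod z \<Longrightarrow> gm z ** transpose (gm (- z)) = mat 1"
proof -
  have "plus_factor gp" "plus_factor (chart_at_infinity gm)"
    using bf by (simp_all add: birkhoff_factorization_def minus_factor_iff)
  then have K: "disk_analytic_matrix (twisted_gram gp)"
    and L: "disk_analytic_matrix (twisted_gram (chart_at_infinity gm))"
    by (simp_all add: plus_factor_iff disk_analytic_matrix_twisted_gram)
  have KL: "twisted_gram gp z = twisted_gram (chart_at_infinity gm) (cnj z)" if "cmod z = 1" for z
    using twisted_gram_chart_at_infinity[OF tw bf that] by (simp add: diag_powers_zero)
  note reflection = disk_analytic_matrix_reflection_eq[OF K L KL]
  have K0: "twisted_gram gp 0 = mat 1"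
    using reflection(1)[of 0] by (simp add: twisted_gram_chart_at_infinity_0)
  show "gp z ** transpose (gp (- z)) = mat 1" if "cmod z \<le> 1"
    using reflection(1)[of z] that
    by (simp add: twisted_gram_chart_at_infinity_0 flip: twisted_gram_eq_mat_1_iff)
  show "gm z ** transpose (gm (- z)) = mat 1" if "1 \<le> cmod z"
  proof -
    have "z \<noteq> 0" "1 / z \<in> cball 0 1"
      using that by (auto simp: norm_divide divide_le_eq)
    then have "twisted_gram (chart_at_infinity gm) (1 / z) = mat 1"
      using reflection(2) K0 by simp
    moreover have "twisted_gram (chart_at_infinity gm) (1 / z) = twisted_gram gm z"
      using \<open>z \<noteq> 0\<close> chart_at_infinity_inverse[of z gm] chart_at_infinity_inverse[of "- z" gm]
      by (simp add: twisted_gram_def)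
    ultimately show ?thesis
      by (simp flip: twisted_gram_eq_mat_1_iff)
  qed
qed

theorem proposition5p1:
  fixes g gp gm :: "complex \<Rightarrow> complex^'n^'n" and a :: "'n \<Rightarrow> int"
  assumes "smooth_loop g"
    and "\<forall>z. cmod z = 1 \<longrightarrow> g z ** transpose (g (- z)) = mat 1"
    and "birkhoff_factorization g gp a gm"
  shows "(\<forall>z. cmod z = 1 \<longrightarrow> diag_powers a z = mat 1)
    \<and> (\<forall>hp b hm. birkhoff_factorization g hp b hm \<longrightarrow>
          (\<forall>z. cmod z = 1 \<longrightarrow> hp z = gp z \<and> diag_powers b z = diag_powers a z \<and> hm z = gm z))
    \<and> (\<forall>z. cmod z \<le> 1 \<longrightarrow> gp z ** transpose (gp (- z)) = mat 1)
    \<and> (\<forall>z. cmod z \<ge> 1 \<longrightarrow> gm z ** transpose (gm (- z)) = mat 1)"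
proof -
  have tw: "twisted_orthogonal_loop g"
    using assms(2) by (simp add: twisted_orthogonal_loop_def)
  have a: "a = (\<lambda>_. 0)"
    using birkhoff_exponents_zero[OF tw assms(3)] .
  then have bf: "birkhoff_factorization g gp (\<lambda>_. 0) gm"
    using assms(3) by simp
  have unique: "hp z = gp z \<and> diag_powers b z = diag_powers a z \<and> hm z = gm z"
    if bf': "birkhoff_factorization g hp b hm" and z: "cmod z = 1" for hp b hm z
  proof -
    have "b = (\<lambda>_. 0)"
      using birkhoff_exponents_zero[OF tw bf'] .
    then show ?thesis
      using birkhoff_factorization_unique[OF bf, of hp hm] bf' z a by simp
  qed
  show ?thesis
    using unique birkhoff_factors_twisted_orthogonal[OF tw bf] a by (simp add: diag_powers_zero)
qed

end
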